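(* Let $p\in J$ and let $p=a_Iq_I+a_Jq_J$ (with $a_I+a_J=1$) be a two-point splitting that is optimal at $p$, i.e. attains the maximum in $V_\delta(p)=\max_{\mu\in\mathcal{S}(p)}\{(1-\delta)\mu(\{q\in I\})+\delta\,\mathbb{E}_\mu[V_\delta(\phi(q))]\}$. If $a_I>0$ and $a_J>0$, then (1) $V_\delta$ is affine on the segment $[q_I,q_J]$; and (2) for every $p'\in[q_I,q_J]$, the splitting of $p'$ between $q_I$ and $q_J$ (with the weights determined by $p'$) is optimal at $p'$.
   Context: Let $\Omega$ be a finite set, identify each $\omega$ with a unit vector of $\mathbb{R}^\Omega$ and $\Delta(\Omega)$ with the unit simplex. Let $M$ be the transition matrix of an irreducible Markov chain on $\Omega$, $r:\Omega\to\mathbb{R}$, $\delta\in[0,1)$, $\phi(q)=qM$. $I=\{p:\sum_\omega p(\omega)r(\omega)\ge0\}$, $J=\Delta(\Omega)\setminus I$. $\mathcal{S}(p)$ is the set of Borel probability measures on $\Delta(\Omega)$ with mean $p$; a decomposition $p=a_Iq_I+a_Jq_J$ is identified with the measure giving weight $a_I$ to $q_I$ and $a_J$ to $q_J$. $V_\delta$ is the value of the advisor's problem (at each stage choose $\mu\in\mathcal{S}(p_n)$, draw $q_n\sim\mu$, receive $\mathbf{1}_{\{q_n\in I\}}$, move to $p_{n+1}=\phi(q_n)$, payoff $\mathbb{E}[(1-\delta)\sum_n\delta^{n-1}\mathbf{1}_{\{q_n\in I\}}]$), the unique solution of the dynamic programming equation in the claim. *)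

theory Defs
  imports "HOL-Probability.Probability"
begin

text \<open>Beliefs are vectors in real^'w indexed by the finite state space 'w.
  The transition matrix M is a real^'w^'w with M$i$j the probability i to j.\<close>

definition beliefs :: "(real^'w::finite) set" where
  "beliefs = {p. (\<forall>w. 0 \<le> p$w) \<and> (\<Sum>w\<in>UNIV. p$w) = 1}"

definition stochastic :: "real^'w^'w::finite \<Rightarrow> bool" where
  "stochastic M \<longleftrightarrow> (\<forall>i j. 0 \<le> M$i$j) \<and> (\<forall>i. (\<Sum>j\<in>UNIV. M$i$j) = 1)"

definition irreducible_chain :: "real^'w^'w::finite \<Rightarrow> bool" where
  "irreducible_chain M \<longleftrightarrow> (\<forall>i j. (i, j) \<in> {(a, b). 0 < M$a$b}\<^sup>*)"

definition phi :: "real^'w^'w::finite \<Rightarrow> real^'w \<Rightarrow> real^'w" where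
  "phi M q = q v* M"

definition Iset :: "('w::finite \<Rightarrow> real) \<Rightarrow> (real^'w) set" where
  "Iset r = {p \<in> beliefs. (\<Sum>w\<in>UNIV. p$w * r w) \<ge> 0}"

definition Jset :: "('w::finite \<Rightarrow> real) \<Rightarrow> (real^'w) set" where
  "Jset r = beliefs - Iset r"

definition Splits :: "real^'w::finite \<Rightarrow> (real^'w) measure set" where
  "Splits p = {\<mu>. sets \<mu> = sets borel \<and> prob_space \<mu> \<and> (AE q in \<mu>. q \<in> beliefs)
                  \<and> integrable \<mu> (\<lambda>q. q) \<and> (\<integral>q. q \<partial>\<mu>) = p}"

definition obj :: "real^'w^'w::finite \<Rightarrow> ('w \<Rightarrow> real) \<Rightarrow> real \<Rightarrow> (real^'w \<Rightarrow> real)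
                     \<Rightarrow> (real^'w) measure \<Rightarrow> real" where
  "obj M r \<delta> V \<mu> = (1 - \<delta>) * measure \<mu> (Iset r) + \<delta> * (\<integral>q. V (phi M q) \<partial>\<mu>)"

text \<open>Bounded Borel solutions of the dynamic programming equation on the beliefs,
  normalised to 0 outside the beliefs (so that the solution is unique as a function).\<close>
definition DP_solution :: "real^'w^'w::finite \<Rightarrow> ('w \<Rightarrow> real) \<Rightarrow> real \<Rightarrow> (real^'w \<Rightarrow> real) \<Rightarrow> bool" where
  "DP_solution M r \<delta> V \<longleftrightarrow>
     V \<in> borel_measurable borel \<and> bounded (V ` beliefs) \<and> (\<forall>p. p \<notin> beliefs \<longrightarrow> V p = 0)
     \<and> (\<forall>p\<in>beliefs. V p = (SUP \<mu>\<in>Splits p. obj M r \<delta> V \<mu>))"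

definition Vdelta :: "real^'w^'w::finite \<Rightarrow> ('w \<Rightarrow> real) \<Rightarrow> real \<Rightarrow> (real^'w \<Rightarrow> real)" where
  "Vdelta M r \<delta> = (THE V. DP_solution M r \<delta> V)"

definition two_point :: "real \<Rightarrow> real^'w::finite \<Rightarrow> real^'w \<Rightarrow> (real^'w) measure" where
  "two_point a x y = distr (measure_pmf (map_pmf (\<lambda>b. if b then x else y) (bernoulli_pmf a))) borel (\<lambda>q. q)"

definition optimal_at :: "real^'w^'w::finite \<Rightarrow> ('w \<Rightarrow> real) \<Rightarrow> real \<Rightarrow> real^'w
                           \<Rightarrow> (real^'w) measure \<Rightarrow> bool" where
  "optimal_at M r \<delta> p \<mu> \<longleftrightarrow> \<mu> \<in> Splits p \<and> obj M r \<delta> (Vdelta M r \<delta>) \<mu> = Vdelta M r \<delta> p"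

end

theory Submission
  imports Defs
begin

text \<open>Mixing a splitting of x with a splitting of y gives a splitting of the corresponding mixture
  of x and y, and the objective is affine under such mixing; hence the Bellman operator preserves
  concavity, and so does its unique fixed point V, obtained by value iteration (the operator is a
  \<delta>-contraction in the sup norm). Concave functions on the simplex are lower semicontinuous, which
  makes the iterates Borel.

  At an optimal splitting p = aI qI + aJ qJ with both weights positive,
  V(p) = aI obj(return qI) + aJ obj(return qJ) \<le> aI V(qI) + aJ V(qJ) \<le> V(p),
  so the point masses at qI and qJ are optimal at their own points. Consequently, for every point
  of the segment [qI, qJ], its splitting between qI and qJ attains the chord, so V lies above the
  chord on the segment; and a concave function touching its chord at the interior point p lies
  below it.\<close>

lemma concave_onI:
  assumes "convex A"
    and "\<And>t x y. 0 \<le> t \<Longrightarrow> t \<le> 1 \<Longrightarrow> x \<in> A \<Longrightarrow> y \<in> A \<Longrightarrow>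
      (1 - t) * f x + t * f y \<le> f ((1 - t) *\<^sub>R x + t *\<^sub>R y)"
  shows "concave_on A f"
  unfolding concave_on_def by (rule convex_onI) (use assms in \<open>auto simp: algebra_simps\<close>)

lemma concave_on_le_chord_if_touches:
  fixes V :: "'a::real_vector \<Rightarrow> real"
  assumes conc: "concave_on S V" and x: "x \<in> S" and y: "y \<in> S"
    and s: "0 < s" "s < 1" and touch: "V ((1 - s) *\<^sub>R x + s *\<^sub>R y) = (1 - s) * V x + s * V y"
    and t: "0 \<le> t" "t \<le> 1"
  shows "V ((1 - t) *\<^sub>R x + t *\<^sub>R y) \<le> (1 - t) * V x + t * V y"
proof -
  define pt where "pt u = (1 - u) *\<^sub>R x + u *\<^sub>R y" for u
  define chord where "chord u = (1 - u) * V x + u * V y" for u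
  have pt_in: "pt u \<in> S" if "0 \<le> u" "u \<le> 1" for u
    using conc x y that unfolding pt_def concave_on_iff by (auto intro: convexD_alt)
  have pt_mix: "(1 - l) *\<^sub>R pt u + l *\<^sub>R pt v = pt ((1 - l) * u + l * v)" for l u v
    by (simp add: pt_def algebra_simps)
  have chord_mix: "(1 - l) * chord u + l * chord v = chord ((1 - l) * u + l * v)" for l u v
    by (simp add: chord_def algebra_simps)
  have ends: "V (pt 0) = chord 0" "V (pt 1) = chord 1" by (simp_all add: pt_def chord_def)
  \<comment> \<open>write s as a proper convex combination of t and the endpoint on the far side of s\<close>
  obtain e l where e: "e \<in> {0, 1}" and l: "0 \<le> l" "l < 1" and sl: "(1 - l) * t + l * e = s"
  proof (cases "t < s")
    case True
    define l where "l = (s - t) / (1 - t)"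
    have "l * (1 - t) = s - t" using True s by (simp add: l_def)
    then have "(1 - l) * t + l * 1 = s" by (simp add: algebra_simps)
    moreover have "0 \<le> l" "l < 1" using True s t by (auto simp: l_def field_simps)
    ultimately show ?thesis by (intro that[of 1 l]) auto
  next
    case False
    show ?thesis by (rule that[of 0 "1 - s / t"]) (use False s t in \<open>auto simp: field_simps\<close>)
  qed
  have "(1 - l) * V (pt t) + l * V (pt e) \<le> V (pt s)"
    using concave_onD[OF conc, of l "pt t" "pt e"] pt_in e l t sl pt_mix by auto
  also have "V (pt s) = (1 - l) * chord t + l * chord e"
    using touch sl chord_mix by (simp add: pt_def chord_def)
  finally have "(1 - l) * V (pt t) \<le> (1 - l) * chord t" using e ends by auto
  then show ?thesis using l by (simp add: pt_def chord_def)
qed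

lemma closed_beliefs: "closed (beliefs :: (real^'w::finite) set)"
  unfolding beliefs_def
  by (intro closed_Collect_conj closed_Collect_all closed_Collect_le closed_Collect_eq continuous_intros)

lemma beliefs_borel [measurable]: "(beliefs :: (real^'w::finite) set) \<in> sets borel"
  using closed_beliefs by (rule borel_closed)

lemma convex_beliefs: "convex (beliefs :: (real^'w::finite) set)"
proof (rule convexI)
  fix x y :: "real^'w" and u v :: real
  assume "x \<in> beliefs" "y \<in> beliefs" "0 \<le> u" "0 \<le> v" "u + v = 1"
  then show "u *\<^sub>R x + v *\<^sub>R y \<in> beliefs"
    by (auto simp: beliefs_def sum.distrib simp flip: sum_distrib_left)
qed

lemma norm_le_1_if_belief: "q \<in> beliefs \<Longrightarrow> norm q \<le> 1"
  using norm_le_l1_cart[of q] unfolding beliefs_def by simp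

lemma abs_component_le_1_if_belief:
  assumes "q \<in> beliefs"
  shows "\<bar>q$w\<bar> \<le> 1"
proof -
  have "q$w \<le> (\<Sum>v\<in>UNIV. q$v)"
    by (rule member_le_sum) (use assms in \<open>auto simp: beliefs_def\<close>)
  then show ?thesis using assms by (simp add: beliefs_def)
qed

lemma phi_in_beliefs:
  assumes "stochastic M" "q \<in> beliefs"
  shows "phi M q \<in> beliefs"
proof -
  have "(\<Sum>j\<in>UNIV. \<Sum>i\<in>UNIV. M$i$j * q$i) = (\<Sum>i\<in>UNIV. q$i * (\<Sum>j\<in>UNIV. M$i$j))"
    by (subst sum.swap) (simp add: sum_distrib_left mult.commute)
  also have "\<dots> = 1" using assms unfolding stochastic_def beliefs_def by simp
  finally show ?thesis using assms unfolding stochastic_def beliefs_def phi_def vector_matrix_mult_def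
    by (auto intro!: sum_nonneg simp: mult.commute)
qed

lemma phi_borel [measurable]: "phi M \<in> borel_measurable borel"
proof -
  have "continuous_on UNIV (phi M)"
    unfolding phi_def vector_matrix_mult_def by (intro continuous_on_vec_lambda continuous_intros)
  then show ?thesis using borel_measurable_continuous_onI by blast
qed

lemma Iset_borel [measurable]: "Iset r \<in> sets borel"
proof -
  have "Iset r = beliefs \<inter> {p. 0 \<le> (\<Sum>w\<in>UNIV. p$w * r w)}" unfolding Iset_def by auto
  moreover have "closed {p::real^'a. 0 \<le> (\<Sum>w\<in>UNIV. p$w * r w)}"
    by (intro closed_Collect_le continuous_intros)
  ultimately show ?thesis using closed_beliefs by (auto intro: borel_closed)
qed

subsection \<open>Belief measures and their mixtures\<close>

definition belief_measure :: "(real^'w::finite) measure \<Rightarrow> bool" where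
  "belief_measure \<mu> \<longleftrightarrow> sets \<mu> = sets borel \<and> prob_space \<mu> \<and> (AE q in \<mu>. q \<in> beliefs)"

lemma belief_measure_if_Splits: "\<mu> \<in> Splits p \<Longrightarrow> belief_measure \<mu>"
  unfolding Splits_def belief_measure_def by auto

lemma space_belief_measure: "belief_measure \<mu> \<Longrightarrow> space \<mu> = UNIV"
  unfolding belief_measure_def using sets_eq_imp_space_eq[of \<mu> borel] by simp

lemma borel_measurable_belief_measure:
  assumes "belief_measure \<mu>" "f \<in> borel_measurable borel"
  shows "f \<in> borel_measurable \<mu>"
  using assms measurable_cong_sets[of \<mu> borel borel borel] unfolding belief_measure_def by blast

lemma integrable_belief_measure:
  fixes f :: "real^'w::finite \<Rightarrow> 'b::{banach, second_countable_topology}"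
  assumes \<mu>: "belief_measure \<mu>" and f: "f \<in> borel_measurable borel"
    and B: "\<And>q. q \<in> beliefs \<Longrightarrow> norm (f q) \<le> B"
  shows "integrable \<mu> f"
proof (rule finite_measure.integrable_const_bound)
  show "finite_measure \<mu>" using \<mu> by (simp add: belief_measure_def prob_space_def)
  show "AE q in \<mu>. norm (f q) \<le> B"
    using \<mu> unfolding belief_measure_def by (auto elim!: AE_mp intro: B)
  show "f \<in> borel_measurable \<mu>" by (rule borel_measurable_belief_measure[OF \<mu> f])
qed

lemma return_in_Splits:
  assumes "x \<in> beliefs"
  shows "return borel x \<in> Splits x"
proof -
  interpret prob_space "return borel x" by (simp add: prob_space_return)
  show ?thesis
    unfolding Splits_def using assms
    by (auto simp: prob_space_return AE_return integral_return intro!: integrable_const_bound[where B="norm x"])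
qed

definition mix :: "real \<Rightarrow> 'a measure \<Rightarrow> 'a measure \<Rightarrow> 'a measure" where
  "mix a \<mu>1 \<mu>2 = measure_pmf (bernoulli_pmf a) \<bind> (\<lambda>b. if b then \<mu>1 else \<mu>2)"

context
  fixes \<mu>1 \<mu>2 :: "(real^'w::finite) measure"
  assumes \<mu>1: "belief_measure \<mu>1" and \<mu>2: "belief_measure \<mu>2"
begin

lemma mix_kernel_measurable:
  "(\<lambda>b. if b then \<mu>1 else \<mu>2) \<in> measurable (measure_pmf (bernoulli_pmf a)) (subprob_algebra borel)"
  using \<mu>1 \<mu>2 unfolding belief_measure_def
  by (auto simp: space_subprob_algebra prob_space_imp_subprob_space)

lemma belief_measure_mix: "belief_measure (mix a \<mu>1 \<mu>2)"
proof -
  have "sets (mix a \<mu>1 \<mu>2) = sets borel"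
    unfolding mix_def using \<mu>1 \<mu>2 unfolding belief_measure_def
    by (subst sets_bind[where N=borel]) auto
  moreover have "prob_space (mix a \<mu>1 \<mu>2)"
    unfolding mix_def
    by (rule prob_space.prob_space_bind[OF prob_space_measure_pmf _ mix_kernel_measurable])
       (use \<mu>1 \<mu>2 in \<open>auto simp: belief_measure_def\<close>)
  moreover have "AE q in mix a \<mu>1 \<mu>2. q \<in> beliefs"
    unfolding mix_def
    by (subst AE_bind[OF mix_kernel_measurable]) (use \<mu>1 \<mu>2 in \<open>auto simp: belief_measure_def\<close>)
  ultimately show ?thesis unfolding belief_measure_def by auto
qed

lemma integral_mix:
  fixes f :: "real^'w \<Rightarrow> real"
  assumes a: "0 \<le> a" "a \<le> 1"
    and f [measurable]: "f \<in> borel_measurable borel" and B: "\<And>q. q \<in> beliefs \<Longrightarrow> \<bar>f q\<bar> \<le> B"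
  shows "(\<integral>q. f q \<partial>mix a \<mu>1 \<mu>2) = a * (\<integral>q. f q \<partial>\<mu>1) + (1 - a) * (\<integral>q. f q \<partial>\<mu>2)"
proof -
  \<comment> \<open>integral_bind needs a global bound, so f is first cut off outside the beliefs\<close>
  define f' where "f' q = indicator beliefs q * f q" for q
  have f' [measurable]: "f' \<in> borel_measurable borel" unfolding f'_def by measurable
  have ae: "AE q in \<mu>. f q = f' q" if "belief_measure \<mu>" for \<mu>
    using that unfolding belief_measure_def f'_def by (auto elim!: AE_mp)
  have cong: "(\<integral>q. f q \<partial>\<mu>) = (\<integral>q. f' q \<partial>\<mu>)" if "belief_measure \<mu>" for \<mu>
    by (rule integral_cong_AE[OF borel_measurable_belief_measure[OF that f]
          borel_measurable_belief_measure[OF that f'] ae[OF that]])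
  have bnd: "AE b in measure_pmf (bernoulli_pmf a).
      emeasure (if b then \<mu>1 else \<mu>2) (space (if b then \<mu>1 else \<mu>2)) \<le> ennreal 1"
    using \<mu>1 \<mu>2 by (auto simp: belief_measure_def prob_space.emeasure_space_1)
  have "(\<integral>q. f' q \<partial>mix a \<mu>1 \<mu>2)
      = (\<integral>b. (\<integral>q. f' q \<partial>(if b then \<mu>1 else \<mu>2)) \<partial>measure_pmf (bernoulli_pmf a))"
    unfolding mix_def
    by (rule integral_bind[OF f' _ mix_kernel_measurable measure_pmf.finite_measure_axioms bnd,
          where B="\<bar>B\<bar>"])
       (use B in \<open>auto simp: f'_def indicator_def intro: order_trans[OF _ abs_ge_self]\<close>)
  also have "\<dots> = a * (\<integral>q. f' q \<partial>\<mu>1) + (1 - a) * (\<integral>q. f' q \<partial>\<mu>2)"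
    by (subst integral_measure_pmf_real[where A=UNIV]) (use a in \<open>auto simp: UNIV_bool\<close>)
  finally show ?thesis using cong \<mu>1 \<mu>2 belief_measure_mix by simp
qed

lemma measure_mix:
  assumes a: "0 \<le> a" "a \<le> 1" and A [measurable]: "A \<in> sets borel"
  shows "measure (mix a \<mu>1 \<mu>2) A = a * measure \<mu>1 A + (1 - a) * measure \<mu>2 A"
proof -
  have "(\<integral>q. indicator A q \<partial>mix a \<mu>1 \<mu>2)
      = a * (\<integral>q. indicator A q \<partial>\<mu>1) + (1 - a) * (\<integral>q. indicator A q \<partial>\<mu>2)"
    by (rule integral_mix[OF a, where B=1]) (auto simp: indicator_def)
  then show ?thesis
    using space_belief_measure[OF \<mu>1] space_belief_measure[OF \<mu>2]
      space_belief_measure[OF belief_measure_mix]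
    by simp
qed

lemma obj_mix:
  assumes "stochastic M" and a: "0 \<le> a" "a \<le> 1"
    and V [measurable]: "V \<in> borel_measurable borel" and B: "\<And>q. q \<in> beliefs \<Longrightarrow> \<bar>V q\<bar> \<le> B"
  shows "obj M r \<delta> V (mix a \<mu>1 \<mu>2) = a * obj M r \<delta> V \<mu>1 + (1 - a) * obj M r \<delta> V \<mu>2"
proof -
  have e: "(\<integral>q. V (phi M q) \<partial>mix a \<mu>1 \<mu>2)
      = a * (\<integral>q. V (phi M q) \<partial>\<mu>1) + (1 - a) * (\<integral>q. V (phi M q) \<partial>\<mu>2)"
    by (rule integral_mix[OF a, where B=B]) (use B phi_in_beliefs[OF assms(1)] in auto)
  show ?thesis unfolding obj_def e measure_mix[OF a Iset_borel]
    by (simp add: algebra_simps)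
qed

end

lemma mix_in_Splits:
  assumes s: "\<mu>1 \<in> Splits p1" "\<mu>2 \<in> Splits p2" and a: "0 \<le> a" "a \<le> 1"
  shows "mix a \<mu>1 \<mu>2 \<in> Splits (a *\<^sub>R p1 + (1 - a) *\<^sub>R p2)"
proof -
  have \<mu>: "belief_measure \<mu>1" "belief_measure \<mu>2" using s by (auto intro: belief_measure_if_Splits)
  have mix: "belief_measure (mix a \<mu>1 \<mu>2)" by (rule belief_measure_mix[OF \<mu>])
  have int_id: "integrable \<nu> (\<lambda>q. q)" if "belief_measure \<nu>" for \<nu>
    by (rule integrable_belief_measure[OF that]) (auto intro: norm_le_1_if_belief)
  have comp: "(\<integral>q. q \<partial>\<nu>) $ w = (\<integral>q. q $ w \<partial>\<nu>)" if "belief_measure \<nu>" for \<nu> w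
    by (rule integral_bounded_linear[OF bounded_linear_vec_nth int_id[OF that], symmetric])
  have "(\<integral>q. q \<partial>mix a \<mu>1 \<mu>2) $ w = (a *\<^sub>R p1 + (1 - a) *\<^sub>R p2) $ w" for w
  proof -
    have "(\<integral>q. q \<partial>mix a \<mu>1 \<mu>2) $ w = a * (\<integral>q. q $ w \<partial>\<mu>1) + (1 - a) * (\<integral>q. q $ w \<partial>\<mu>2)"
      unfolding comp[OF mix]
      by (rule integral_mix[OF \<mu> a, where B=1]) (auto intro: abs_component_le_1_if_belief)
    then show ?thesis using s comp[OF \<mu>(1)] comp[OF \<mu>(2)] by (simp add: Splits_def)
  qed
  then have "(\<integral>q. q \<partial>mix a \<mu>1 \<mu>2) = a *\<^sub>R p1 + (1 - a) *\<^sub>R p2" by (simp add: vec_eq_iff)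
  then show ?thesis using mix int_id[OF mix] unfolding Splits_def belief_measure_def by auto
qed

lemma two_point_eq_mix: "two_point a x y = mix a (return borel x) (return borel y)"
proof -
  have "(\<lambda>b. if b then return borel x else return borel y) = (\<lambda>b. return borel (if b then x else y))"
    by auto
  then have "mix a (return borel x) (return borel y)
      = distr (measure_pmf (bernoulli_pmf a)) borel (\<lambda>b. if b then x else y)"
    unfolding mix_def by (simp add: bind_return_distr')
  also have "\<dots> = two_point a x y"
    unfolding two_point_def map_pmf_rep_eq by (subst distr_distr) (auto simp: comp_def)
  finally show ?thesis ..
qed

lemma two_point_in_Splits:
  assumes "x \<in> beliefs" "y \<in> beliefs" "0 \<le> a" "a \<le> 1"
  shows "two_point a x y \<in> Splits (a *\<^sub>R x + (1 - a) *\<^sub>R y)"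
  unfolding two_point_eq_mix by (rule mix_in_Splits[OF return_in_Splits return_in_Splits]) (use assms in auto)

lemma obj_two_point:
  assumes "stochastic M" "x \<in> beliefs" "y \<in> beliefs" "0 \<le> a" "a \<le> 1"
    and "V \<in> borel_measurable borel" "\<And>q. q \<in> beliefs \<Longrightarrow> \<bar>V q\<bar> \<le> B"
  shows "obj M r \<delta> V (two_point a x y)
    = a * obj M r \<delta> V (return borel x) + (1 - a) * obj M r \<delta> V (return borel y)"
  unfolding two_point_eq_mix
  by (rule obj_mix) (use assms belief_measure_if_Splits return_in_Splits in auto)


subsection \<open>Concave functions on the simplex\<close>

definition concave_values :: "(real^'w::finite \<Rightarrow> real) set" where
  "concave_values = {V. (\<forall>p. 0 \<le> V p \<and> V p \<le> 1) \<and> (\<forall>p. p \<notin> beliefs \<longrightarrow> V p = 0)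
                        \<and> concave_on beliefs V}"

lemma belief_as_mixture_near:
  assumes p: "p \<in> beliefs" and q: "q \<in> beliefs" and s: "0 < s"
    and near: "\<And>w. 0 < p$w \<Longrightarrow> dist q p \<le> s * p$w"
  shows "\<exists>z\<in>beliefs. q = (1 - s) *\<^sub>R p + s *\<^sub>R z"
proof
  define z where "z = (1 / s) *\<^sub>R (q - (1 - s) *\<^sub>R p)"
  have z_nth: "z$w = (q$w - (1 - s) * p$w) / s" for w by (simp add: z_def)
  have "0 \<le> z$w" for w
  proof (cases "p$w = 0")
    case True then show ?thesis using q s by (simp add: z_nth beliefs_def)
  next
    case False
    then have pw: "0 < p$w" using p by (simp add: beliefs_def order_less_le)
    have "p$w - q$w \<le> dist q p"
      using component_le_norm_cart[of "q - p" w] by (simp add: dist_norm)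
    then have "(1 - s) * p$w \<le> q$w" using near[OF pw] by (simp add: algebra_simps)
    then show ?thesis using s by (simp add: z_nth)
  qed
  moreover have "(\<Sum>w\<in>UNIV. z$w) = ((\<Sum>w\<in>UNIV. q$w) - (1 - s) * (\<Sum>w\<in>UNIV. p$w)) / s"
    by (simp add: z_nth sum_divide_distrib[symmetric] sum_subtractf sum_distrib_left)
  ultimately show "z \<in> beliefs" using p q s by (simp add: beliefs_def)
  show "q = (1 - s) *\<^sub>R p + s *\<^sub>R z" using s by (simp add: z_def algebra_simps)
qed

text \<open>m is the smallest positive coordinate of p, so that each q with dist q p < m is a mixture of
  p and some belief with weight dist q p / m on the latter.\<close>

lemma concave_values_lower_estimate:
  assumes V: "V \<in> concave_values" and p: "p \<in> beliefs"
  shows "\<exists>m>0. \<forall>q\<in>beliefs. dist q p < m \<longrightarrow> V p - dist q p / m \<le> V q"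
proof -
  define P where "P = {p$w | w. 0 < p$w}"
  have "P \<noteq> {}"
  proof
    assume "P = {}"
    then have "\<forall>w. p$w = 0" using p unfolding P_def beliefs_def by (force simp: order.order_iff_strict)
    then show False using p unfolding beliefs_def by simp
  qed
  moreover have "finite P" unfolding P_def by simp
  ultimately have m_pos: "Min P > 0" and m_le: "\<And>w. 0 < p$w \<Longrightarrow> Min P \<le> p$w"
    by (auto simp: P_def intro!: Min_le)
  show ?thesis
  proof (intro exI[of _ "Min P"] conjI m_pos ballI impI)
    fix q assume q: "q \<in> beliefs" and d: "dist q p < Min P"
    define s where "s = dist q p / Min P"
    show "V p - dist q p / Min P \<le> V q"
    proof (cases "q = p")
      case False
      then have s: "0 < s" "s < 1" using d m_pos by (auto simp: s_def)
      have "dist q p \<le> s * p$w" if "0 < p$w" for w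
        using m_le[OF that] s m_pos by (simp add: s_def field_simps)
      then obtain z where z: "z \<in> beliefs" and qz: "q = (1 - s) *\<^sub>R p + s *\<^sub>R z"
        using belief_as_mixture_near[OF p q s(1)] by blast
      have "(1 - s) * V p + s * V z \<le> V q"
        unfolding qz using V p z s by (intro concave_onD) (auto simp: concave_values_def)
      moreover have "s * V p \<le> s" "0 \<le> s * V z"
        using V s by (auto simp: concave_values_def mult_left_le)
      ultimately have "V p - s \<le> V q" by (simp add: algebra_simps)
      then show ?thesis by (simp add: s_def)
    qed simp
  qed
qed

lemma concave_values_borel:
  assumes V: "V \<in> concave_values"
  shows "V \<in> borel_measurable borel"
proof (subst borel_measurable_iff_greater, intro allI)
  fix c :: real
  define S where "S = {x \<in> beliefs. c < V x}"
  have "openin (top_of_set beliefs) S"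
    unfolding openin_euclidean_subtopology_iff
  proof (intro conjI ballI)
    show "S \<subseteq> beliefs" by (auto simp: S_def)
    fix x assume "x \<in> S"
    then have x: "x \<in> beliefs" and cx: "c < V x" by (auto simp: S_def)
    obtain m where m: "m > 0" "\<And>q. q \<in> beliefs \<Longrightarrow> dist q x < m \<Longrightarrow> V x - dist q x / m \<le> V q"
      using concave_values_lower_estimate[OF V x] by blast
    show "\<exists>e>0. \<forall>x'\<in>beliefs. dist x' x < e \<longrightarrow> x' \<in> S"
    proof (intro exI[of _ "min m ((V x - c) * m)"] conjI ballI impI)
      show "0 < min m ((V x - c) * m)" using m cx by simp
      fix q assume q: "q \<in> beliefs" "dist q x < min m ((V x - c) * m)"
      then have "dist q x / m < V x - c" using m by (simp add: divide_less_eq)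
      then show "q \<in> S" using m(2)[OF q(1)] q unfolding S_def by force
    qed
  qed
  then obtain T where T: "open T" "S = beliefs \<inter> T" by (auto simp: openin_open)
  have "{w \<in> space borel. c < V w} = S \<union> (if c < 0 then - beliefs else {})"
    using V unfolding S_def concave_values_def by auto
  also have "\<dots> \<in> sets borel" using T by auto
  finally show "{w \<in> space borel. c < V w} \<in> sets borel" .
qed


subsection \<open>The Bellman operator\<close>

definition bellman :: "real^'w::finite^'w \<Rightarrow> ('w \<Rightarrow> real) \<Rightarrow> real \<Rightarrow> (real^'w \<Rightarrow> real) \<Rightarrow> real^'w \<Rightarrow> real"
  where "bellman M r \<delta> V p = (if p \<in> beliefs then (SUP \<mu>\<in>Splits p. obj M r \<delta> V \<mu>) else 0)"

definition bounded_borel_value :: "(real^'w::finite \<Rightarrow> real) \<Rightarrow> real \<Rightarrow> bool" where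
  "bounded_borel_value V B \<longleftrightarrow> V \<in> borel_measurable borel \<and> (\<forall>q\<in>beliefs. \<bar>V q\<bar> \<le> B)"

lemma bounded_borel_value_if_concave_values: "V \<in> concave_values \<Longrightarrow> bounded_borel_value V 1"
  using concave_values_borel[of V] unfolding bounded_borel_value_def concave_values_def by auto

lemma Splits_nonempty: "p \<in> beliefs \<Longrightarrow> Splits p \<noteq> {}"
  using return_in_Splits by blast

lemma mult_cSUP_le:
  fixes f :: "'a \<Rightarrow> real"
  assumes "A \<noteq> {}" "bdd_above (f ` A)" "0 \<le> c" "\<And>x. x \<in> A \<Longrightarrow> c * f x \<le> K"
  shows "c * (SUP x\<in>A. f x) \<le> K"
proof (cases "c = 0")
  case True
  then show ?thesis using assms(1,4) by force
next
  case False
  then have c: "c > 0" using assms(3) by simp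
  have "(SUP x\<in>A. f x) \<le> K / c"
    by (rule cSUP_least[OF assms(1)]) (use assms(4) c in \<open>simp add: pos_le_divide_eq mult.commute\<close>)
  then show ?thesis using c by (simp add: pos_le_divide_eq mult.commute)
qed

context
  fixes M :: "real^'w::finite^'w" and r :: "'w \<Rightarrow> real" and \<delta> :: real
  assumes stochastic: "stochastic M" and \<delta>_nonneg: "0 \<le> \<delta>" and \<delta>_less_1: "\<delta> < 1"
begin

lemma integrable_continuation:
  assumes "belief_measure \<mu>" and "bounded_borel_value V B"
  shows "integrable \<mu> (\<lambda>q. V (phi M q))"
  using assms phi_in_beliefs[OF stochastic]
  by (intro integrable_belief_measure[where B=B]) (auto simp: bounded_borel_value_def)

lemma obj_bounds:
  assumes \<mu>: "belief_measure \<mu>" and V: "bounded_borel_value V B"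
    and range: "\<And>q. q \<in> beliefs \<Longrightarrow> lo \<le> V q \<and> V q \<le> hi"
  shows "\<delta> * lo \<le> obj M r \<delta> V \<mu> \<and> obj M r \<delta> V \<mu> \<le> (1 - \<delta>) + \<delta> * hi"
proof -
  interpret prob_space \<mu> using \<mu> by (simp add: belief_measure_def)
  have "AE q in \<mu>. q \<in> beliefs" using \<mu> by (simp add: belief_measure_def)
  then have ae: "AE q in \<mu>. lo \<le> V (phi M q) \<and> V (phi M q) \<le> hi"
    by (rule AE_mp) (use range phi_in_beliefs[OF stochastic] in auto)
  have int: "integrable \<mu> (\<lambda>q. V (phi M q))" by (rule integrable_continuation[OF \<mu> V])
  have "lo \<le> (\<integral>q. V (phi M q) \<partial>\<mu>)" "(\<integral>q. V (phi M q) \<partial>\<mu>) \<le> hi"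
    by (rule integral_ge_const[OF int], use ae in auto) (rule integral_le_const[OF int], use ae in auto)
  then have "\<delta> * lo \<le> \<delta> * (\<integral>q. V (phi M q) \<partial>\<mu>)" "\<delta> * (\<integral>q. V (phi M q) \<partial>\<mu>) \<le> \<delta> * hi"
    "0 \<le> (1 - \<delta>) * measure \<mu> (Iset r)" "(1 - \<delta>) * measure \<mu> (Iset r) \<le> 1 - \<delta>"
    using \<delta>_nonneg \<delta>_less_1 by (auto intro!: mult_left_mono simp: mult_left_le)
  then show ?thesis unfolding obj_def by linarith
qed

lemma obj_le_shift:
  assumes \<mu>: "belief_measure \<mu>" and V: "bounded_borel_value V B" and W: "bounded_borel_value W B'"
    and le: "\<And>q. q \<in> beliefs \<Longrightarrow> V q \<le> W q + d"
  shows "obj M r \<delta> V \<mu> \<le> obj M r \<delta> W \<mu> + \<delta> * d"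
proof -
  interpret prob_space \<mu> using \<mu> by (simp add: belief_measure_def)
  have intV: "integrable \<mu> (\<lambda>q. V (phi M q))" by (rule integrable_continuation[OF \<mu> V])
  have intW: "integrable \<mu> (\<lambda>q. W (phi M q))" by (rule integrable_continuation[OF \<mu> W])
  have "(\<integral>q. V (phi M q) \<partial>\<mu>) \<le> (\<integral>q. W (phi M q) + d \<partial>\<mu>)"
    using \<mu> unfolding belief_measure_def
    by (intro integral_mono_AE intV Bochner_Integration.integrable_add intW)
       (auto elim!: AE_mp intro: le phi_in_beliefs[OF stochastic])
  also have "\<dots> = (\<integral>q. W (phi M q) \<partial>\<mu>) + d" using intW by (simp add: prob_space)
  finally have "\<delta> * (\<integral>q. V (phi M q) \<partial>\<mu>) \<le> \<delta> * ((\<integral>q. W (phi M q) \<partial>\<mu>) + d)"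
    using \<delta>_nonneg by (rule mult_left_mono)
  then show ?thesis unfolding obj_def by (simp add: algebra_simps)
qed

lemma bdd_above_obj:
  assumes V: "bounded_borel_value V B"
  shows "bdd_above (obj M r \<delta> V ` Splits p)"
proof -
  have B: "\<And>q. q \<in> beliefs \<Longrightarrow> -B \<le> V q \<and> V q \<le> B"
    using V by (auto simp: bounded_borel_value_def abs_le_iff)
  show ?thesis
    by (intro bdd_aboveI[where M="(1 - \<delta>) + \<delta> * B"])
       (use obj_bounds[OF belief_measure_if_Splits V B] in auto)
qed

lemma obj_le_bellman:
  assumes "bounded_borel_value V B" "p \<in> beliefs" "\<mu> \<in> Splits p"
  shows "obj M r \<delta> V \<mu> \<le> bellman M r \<delta> V p"
  unfolding bellman_def using assms by (simp add: cSUP_upper[OF _ bdd_above_obj])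

lemma bellman_le:
  assumes "p \<in> beliefs" "\<And>\<mu>. \<mu> \<in> Splits p \<Longrightarrow> obj M r \<delta> V \<mu> \<le> K"
  shows "bellman M r \<delta> V p \<le> K"
  unfolding bellman_def using assms by (simp add: cSUP_least[OF Splits_nonempty])

lemma bellman_le_shift:
  assumes V: "bounded_borel_value V B" and W: "bounded_borel_value W B'"
    and le: "\<And>q. q \<in> beliefs \<Longrightarrow> V q \<le> W q + d" and p: "p \<in> beliefs"
  shows "bellman M r \<delta> V p \<le> bellman M r \<delta> W p + \<delta> * d"
proof (rule bellman_le[OF p])
  fix \<mu> assume \<mu>: "\<mu> \<in> Splits p"
  have "obj M r \<delta> V \<mu> \<le> obj M r \<delta> W \<mu> + \<delta> * d"
    by (rule obj_le_shift[OF belief_measure_if_Splits[OF \<mu>] V W le])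
  also have "\<dots> \<le> bellman M r \<delta> W p + \<delta> * d" using obj_le_bellman[OF W p \<mu>] by simp
  finally show "obj M r \<delta> V \<mu> \<le> bellman M r \<delta> W p + \<delta> * d" .
qed

lemma obj_mix_le_bellman:
  assumes V: "bounded_borel_value V B" and x: "x \<in> beliefs" "\<mu>1 \<in> Splits x"
    and y: "y \<in> beliefs" "\<mu>2 \<in> Splits y" and t: "0 \<le> t" "t \<le> 1"
  shows "(1 - t) * obj M r \<delta> V \<mu>1 + t * obj M r \<delta> V \<mu>2 \<le> bellman M r \<delta> V ((1 - t) *\<^sub>R x + t *\<^sub>R y)"
proof -
  have "mix (1 - t) \<mu>1 \<mu>2 \<in> Splits ((1 - t) *\<^sub>R x + (1 - (1 - t)) *\<^sub>R y)"
    by (rule mix_in_Splits[OF x(2) y(2)]) (use t in auto)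
  then have mix: "mix (1 - t) \<mu>1 \<mu>2 \<in> Splits ((1 - t) *\<^sub>R x + t *\<^sub>R y)" by simp
  have z: "(1 - t) *\<^sub>R x + t *\<^sub>R y \<in> beliefs" by (rule convexD_alt[OF convex_beliefs x(1) y(1) t])
  have "obj M r \<delta> V (mix (1 - t) \<mu>1 \<mu>2) = (1 - t) * obj M r \<delta> V \<mu>1 + (1 - (1 - t)) * obj M r \<delta> V \<mu>2"
    by (rule obj_mix[OF belief_measure_if_Splits[OF x(2)] belief_measure_if_Splits[OF y(2)] stochastic])
       (use t V in \<open>auto simp: bounded_borel_value_def\<close>)
  then show ?thesis using obj_le_bellman[OF V z mix] by simp
qed

lemma concave_bellman:
  assumes V: "bounded_borel_value V B"
  shows "concave_on beliefs (bellman M r \<delta> V)"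
proof (rule concave_onI[OF convex_beliefs])
  fix x y :: "real^'w" and t :: real
  assume t: "0 \<le> t" "t \<le> 1" and x: "x \<in> beliefs" and y: "y \<in> beliefs"
  define z where "z = (1 - t) *\<^sub>R x + t *\<^sub>R y"
  have step: "(1 - t) * obj M r \<delta> V \<mu>1 + t * bellman M r \<delta> V y \<le> bellman M r \<delta> V z"
    if \<mu>1: "\<mu>1 \<in> Splits x" for \<mu>1
  proof -
    have "t * (SUP \<mu>\<in>Splits y. obj M r \<delta> V \<mu>) \<le> bellman M r \<delta> V z - (1 - t) * obj M r \<delta> V \<mu>1"
      by (rule mult_cSUP_le[OF Splits_nonempty[OF y] bdd_above_obj[OF V]])
         (use t obj_mix_le_bellman[OF V x \<mu>1 y] in \<open>auto simp: z_def algebra_simps\<close>)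
    then show ?thesis using y by (simp add: bellman_def)
  qed
  have "(1 - t) * (SUP \<mu>\<in>Splits x. obj M r \<delta> V \<mu>) \<le> bellman M r \<delta> V z - t * bellman M r \<delta> V y"
    by (rule mult_cSUP_le[OF Splits_nonempty[OF x] bdd_above_obj[OF V]])
       (use t step in \<open>auto simp: algebra_simps\<close>)
  then show "(1 - t) * bellman M r \<delta> V x + t * bellman M r \<delta> V y \<le> bellman M r \<delta> V z"
    using x by (simp add: bellman_def)
qed

lemma bellman_concave_values:
  assumes V: "V \<in> concave_values"
  shows "bellman M r \<delta> V \<in> concave_values"
proof -
  have ok: "bounded_borel_value V 1" by (rule bounded_borel_value_if_concave_values[OF V])
  have range: "\<And>q. q \<in> beliefs \<Longrightarrow> 0 \<le> V q \<and> V q \<le> 1" using V by (auto simp: concave_values_def)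
  have obj: "0 \<le> obj M r \<delta> V \<mu> \<and> obj M r \<delta> V \<mu> \<le> 1" if "\<mu> \<in> Splits p" for \<mu> p
    using obj_bounds[OF belief_measure_if_Splits[OF that] ok range] \<delta>_nonneg by auto
  have "0 \<le> bellman M r \<delta> V p \<and> bellman M r \<delta> V p \<le> 1" for p
  proof (cases "p \<in> beliefs")
    case True
    then have "0 \<le> bellman M r \<delta> V p"
      using obj[OF return_in_Splits] obj_le_bellman[OF ok True return_in_Splits] by force
    then show ?thesis using bellman_le[OF True, of V 1] obj by auto
  qed (simp add: bellman_def)
  then show ?thesis using concave_bellman[OF ok] unfolding concave_values_def by (auto simp: bellman_def)
qed

lemma bellman_dist:
  assumes V: "V \<in> concave_values" and W: "W \<in> concave_values" and d: "\<And>q. \<bar>V q - W q\<bar> \<le> d"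
  shows "\<bar>bellman M r \<delta> V q - bellman M r \<delta> W q\<bar> \<le> \<delta> * d"
proof (cases "q \<in> beliefs")
  case True
  note okV = bounded_borel_value_if_concave_values[OF V]
    and okW = bounded_borel_value_if_concave_values[OF W]
  have "V q' \<le> W q' + d" "W q' \<le> V q' + d" for q' using d[of q'] by (auto simp: abs_le_iff)
  then have "bellman M r \<delta> V q \<le> bellman M r \<delta> W q + \<delta> * d"
    "bellman M r \<delta> W q \<le> bellman M r \<delta> V q + \<delta> * d"
    by (intro bellman_le_shift[OF okV okW _ True] bellman_le_shift[OF okW okV _ True]; simp)+
  then show ?thesis by (simp add: abs_le_iff)
next
  case False
  then show ?thesis using d[of q] \<delta>_nonneg by (simp add: bellman_def)
qed

lemma nonpos_if_le_mult_power:
  fixes x c :: real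
  assumes "\<And>n. x \<le> c * \<delta> ^ n"
  shows "x \<le> 0"
proof -
  have "(\<lambda>n. c * \<delta> ^ n) \<longlonglongrightarrow> c * 0"
    by (intro tendsto_intros) (use \<delta>_nonneg \<delta>_less_1 in auto)
  then show ?thesis using assms by (intro LIMSEQ_le_const) auto
qed

subsection \<open>Value iteration\<close>

definition value_iter :: "nat \<Rightarrow> real^'w \<Rightarrow> real" where
  "value_iter n = (bellman M r \<delta> ^^ n) (\<lambda>_. 0)"

definition value_limit :: "real^'w \<Rightarrow> real" where
  "value_limit q = lim (\<lambda>n. value_iter n q)"

lemma value_iter_Suc: "value_iter (Suc n) = bellman M r \<delta> (value_iter n)"
  by (simp add: value_iter_def)

lemma value_iter_concave_values: "value_iter n \<in> concave_values"
proof (induction n)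
  case 0
  show ?case by (simp add: value_iter_def concave_values_def concave_on_const convex_beliefs)
next
  case (Suc n)
  then show ?case unfolding value_iter_Suc by (rule bellman_concave_values)
qed

lemma value_iter_range: "0 \<le> value_iter n q \<and> value_iter n q \<le> 1"
  using value_iter_concave_values[of n] by (simp add: concave_values_def)

lemma value_iter_step: "\<bar>value_iter (Suc n) q - value_iter n q\<bar> \<le> \<delta> ^ n"
proof (induction n arbitrary: q)
  case 0
  then show ?case using value_iter_range[of 1 q] by (simp add: value_iter_def)
next
  case (Suc n)
  have "\<bar>bellman M r \<delta> (value_iter (Suc n)) q - bellman M r \<delta> (value_iter n) q\<bar> \<le> \<delta> * \<delta> ^ n"
    by (rule bellman_dist[OF value_iter_concave_values value_iter_concave_values Suc.IH])
  then show ?case by (simp only: value_iter_Suc[of "Suc n"] value_iter_Suc[of n] power_Suc)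
qed

lemma value_iter_tendsto: "(\<lambda>n. value_iter n q) \<longlonglongrightarrow> value_limit q"
proof -
  have "summable (\<lambda>k. value_iter (Suc k) q - value_iter k q)"
    by (rule summable_comparison_test'[OF summable_geometric[of \<delta>], where N=0])
       (use \<delta>_nonneg \<delta>_less_1 value_iter_step in auto)
  moreover have "(\<Sum>k<n. value_iter (Suc k) q - value_iter k q) = value_iter n q" for n
    by (subst sum_lessThan_telescope) (simp add: value_iter_def)
  ultimately have "convergent (\<lambda>n. value_iter n q)" by (simp add: summable_iff_convergent)
  then show ?thesis unfolding value_limit_def by (simp add: convergent_LIMSEQ_iff)
qed

lemma value_iter_dist: "\<bar>value_iter (n + k) q - value_iter n q\<bar> \<le> \<delta> ^ n * (1 - \<delta> ^ k) / (1 - \<delta>)"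
proof (induction k)
  case (Suc k)
  have "\<bar>value_iter (n + Suc k) q - value_iter n q\<bar>
      \<le> \<bar>value_iter (Suc (n + k)) q - value_iter (n + k) q\<bar> + \<bar>value_iter (n + k) q - value_iter n q\<bar>"
    by simp
  also have "\<dots> \<le> \<delta> ^ (n + k) + \<delta> ^ n * (1 - \<delta> ^ k) / (1 - \<delta>)"
    using value_iter_step[of "n + k" q] Suc.IH by linarith
  also have "\<dots> = \<delta> ^ n * (1 - \<delta> ^ Suc k) / (1 - \<delta>)"
    using \<delta>_less_1 by (simp add: field_simps power_add)
  finally show ?case .
qed simp

lemma value_limit_dist: "\<bar>value_limit q - value_iter n q\<bar> \<le> \<delta> ^ n / (1 - \<delta>)"
proof (rule LIMSEQ_le_const2)
  show "(\<lambda>k. \<bar>value_iter (k + n) q - value_iter n q\<bar>) \<longlonglongrightarrow> \<bar>value_limit q - value_iter n q\<bar>"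
    by (intro tendsto_intros LIMSEQ_ignore_initial_segment value_iter_tendsto)
  have geom: "\<delta> ^ n * (1 - \<delta> ^ k) / (1 - \<delta>) \<le> \<delta> ^ n / (1 - \<delta>)" for k
    using \<delta>_nonneg \<delta>_less_1 by (intro divide_right_mono) (auto intro!: mult_left_le)
  have "\<bar>value_iter (k + n) q - value_iter n q\<bar> \<le> \<delta> ^ n / (1 - \<delta>)" for k
    using order_trans[OF value_iter_dist[of n k q] geom[of k]] by (simp add: add.commute)
  then show "\<exists>N. \<forall>k\<ge>N. \<bar>value_iter (k + n) q - value_iter n q\<bar> \<le> \<delta> ^ n / (1 - \<delta>)" by blast
qed

lemma value_limit_concave_values: "value_limit \<in> concave_values"
proof -
  have "0 \<le> value_limit q \<and> value_limit q \<le> 1" for q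
    using LIMSEQ_le_const[OF value_iter_tendsto, of 0 q] LIMSEQ_le_const2[OF value_iter_tendsto, of q 1]
      value_iter_range by auto
  moreover have "value_limit q = 0" if "q \<notin> beliefs" for q
  proof -
    have "value_iter n q = 0" for n using value_iter_concave_values[of n] that by (simp add: concave_values_def)
    then show ?thesis using value_iter_tendsto[of q] LIMSEQ_unique[OF _ tendsto_const] by simp
  qed
  moreover have "concave_on beliefs value_limit"
  proof (rule concave_onI[OF convex_beliefs])
    fix x y :: "real^'w" and t :: real
    assume t: "0 \<le> t" "t \<le> 1" and xy: "x \<in> beliefs" "y \<in> beliefs"
    have lim: "(\<lambda>n. value_iter n ((1 - t) *\<^sub>R x + t *\<^sub>R y) - ((1 - t) * value_iter n x + t * value_iter n y))
      \<longlonglongrightarrow> value_limit ((1 - t) *\<^sub>R x + t *\<^sub>R y) - ((1 - t) * value_limit x + t * value_limit y)"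
      by (intro tendsto_intros value_iter_tendsto)
    have "0 \<le> value_iter n ((1 - t) *\<^sub>R x + t *\<^sub>R y) - ((1 - t) * value_iter n x + t * value_iter n y)" for n
      using value_iter_concave_values[of n] xy t by (auto simp: concave_values_def intro: concave_onD)
    then have "0 \<le> value_limit ((1 - t) *\<^sub>R x + t *\<^sub>R y) - ((1 - t) * value_limit x + t * value_limit y)"
      by (intro LIMSEQ_le_const[OF lim]) auto
    then show "(1 - t) * value_limit x + t * value_limit y \<le> value_limit ((1 - t) *\<^sub>R x + t *\<^sub>R y)"
      by simp
  qed
  ultimately show ?thesis by (simp add: concave_values_def)
qed

lemma bellman_value_limit: "bellman M r \<delta> value_limit q = value_limit q"
proof -
  have "\<bar>bellman M r \<delta> value_limit q - value_limit q\<bar> \<le> (2 / (1 - \<delta>)) * \<delta> ^ n" for n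
  proof -
    have "\<bar>bellman M r \<delta> value_limit q - bellman M r \<delta> (value_iter n) q\<bar> \<le> \<delta> * (\<delta> ^ n / (1 - \<delta>))"
      by (rule bellman_dist[OF value_limit_concave_values value_iter_concave_values value_limit_dist])
    moreover have "\<bar>value_limit q - value_iter (Suc n) q\<bar> \<le> \<delta> * (\<delta> ^ n / (1 - \<delta>))"
      using value_limit_dist[of q "Suc n"] by simp
    moreover have "\<delta> * (\<delta> ^ n / (1 - \<delta>)) \<le> \<delta> ^ n / (1 - \<delta>)"
      using \<delta>_nonneg \<delta>_less_1 by (intro mult_left_le_one_le) auto
    ultimately show ?thesis unfolding value_iter_Suc by (simp add: abs_le_iff)
  qed
  then have "\<bar>bellman M r \<delta> value_limit q - value_limit q\<bar> \<le> 0" by (rule nonpos_if_le_mult_power)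
  then show ?thesis by simp
qed

lemma DP_solution_value_limit: "DP_solution M r \<delta> value_limit"
proof -
  have "bounded (value_limit ` beliefs)" unfolding bounded_iff
    by (rule exI[of _ 1]) (use value_limit_concave_values in \<open>auto simp: concave_values_def\<close>)
  moreover have "\<forall>p\<in>beliefs. value_limit p = (SUP \<mu>\<in>Splits p. obj M r \<delta> value_limit \<mu>)"
    using bellman_value_limit by (metis bellman_def)
  ultimately show ?thesis
    unfolding DP_solution_def using concave_values_borel[OF value_limit_concave_values] value_limit_concave_values
    by (auto simp: concave_values_def)
qed

lemma DP_solution_unique:
  assumes W: "DP_solution M r \<delta> W"
  shows "W = value_limit"
proof -
  obtain B where "\<forall>x\<in>beliefs. \<bar>W x\<bar> \<le> B" using W unfolding DP_solution_def bounded_iff by auto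
  then have okW: "bounded_borel_value W B" using W by (simp add: bounded_borel_value_def DP_solution_def)
  have okL: "bounded_borel_value value_limit 1"
    by (rule bounded_borel_value_if_concave_values[OF value_limit_concave_values])
  have outside: "W q = 0" "value_limit q = 0" if "q \<notin> beliefs" for q
    using W value_limit_concave_values that by (auto simp: DP_solution_def concave_values_def)
  have W_fix: "bellman M r \<delta> W q = W q" if "q \<in> beliefs" for q
    using W that by (auto simp: DP_solution_def bellman_def)
  have "\<bar>W q - value_limit q\<bar> \<le> (\<bar>B\<bar> + 1) * \<delta> ^ n" for n q
  proof (induction n arbitrary: q)
    case 0
    show ?case
    proof (cases "q \<in> beliefs")
      case True
      then have "\<bar>W q\<bar> \<le> \<bar>B\<bar>" "\<bar>value_limit q\<bar> \<le> 1"
        using okW okL by (auto simp: bounded_borel_value_def)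
      then show ?thesis by simp
    qed (simp add: outside)
  next
    case (Suc n)
    show ?case
    proof (cases "q \<in> beliefs")
      case True
      have "W q' \<le> value_limit q' + (\<bar>B\<bar> + 1) * \<delta> ^ n" "value_limit q' \<le> W q' + (\<bar>B\<bar> + 1) * \<delta> ^ n" for q'
        using Suc.IH[of q'] by (auto simp: abs_le_iff)
      then have "bellman M r \<delta> W q \<le> bellman M r \<delta> value_limit q + \<delta> * ((\<bar>B\<bar> + 1) * \<delta> ^ n)"
        "bellman M r \<delta> value_limit q \<le> bellman M r \<delta> W q + \<delta> * ((\<bar>B\<bar> + 1) * \<delta> ^ n)"
        by (intro bellman_le_shift[OF okW okL _ True] bellman_le_shift[OF okL okW _ True]; simp)+
      then show ?thesis
        using W_fix[OF True] bellman_value_limit[of q] by (simp add: abs_le_iff algebra_simps)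
    qed (use \<delta>_nonneg outside in simp)
  qed
  then have "\<bar>W q - value_limit q\<bar> \<le> 0" for q by (rule nonpos_if_le_mult_power)
  then show ?thesis by (auto intro!: ext)
qed

lemma Vdelta_eq_value_limit: "Vdelta M r \<delta> = value_limit"
  unfolding Vdelta_def by (rule the_equality[where P="DP_solution M r \<delta>", OF DP_solution_value_limit DP_solution_unique])

lemma Vdelta_concave_values: "Vdelta M r \<delta> \<in> concave_values"
  unfolding Vdelta_eq_value_limit by (rule value_limit_concave_values)

lemma bellman_Vdelta: "bellman M r \<delta> (Vdelta M r \<delta>) q = Vdelta M r \<delta> q"
  unfolding Vdelta_eq_value_limit by (rule bellman_value_limit)

subsection \<open>Optimal two-point splittings\<close>

lemma bounded_borel_value_Vdelta: "bounded_borel_value (Vdelta M r \<delta>) 1"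
  by (rule bounded_borel_value_if_concave_values[OF Vdelta_concave_values])

lemma obj_return_le_Vdelta:
  assumes "q \<in> beliefs"
  shows "obj M r \<delta> (Vdelta M r \<delta>) (return borel q) \<le> Vdelta M r \<delta> q"
  using obj_le_bellman[OF bounded_borel_value_Vdelta assms return_in_Splits[OF assms]] bellman_Vdelta
  by simp

lemma obj_two_point_Vdelta:
  assumes "x \<in> beliefs" "y \<in> beliefs" "0 \<le> a" "a \<le> 1"
  shows "obj M r \<delta> (Vdelta M r \<delta>) (two_point a x y)
    = a * obj M r \<delta> (Vdelta M r \<delta>) (return borel x) + (1 - a) * obj M r \<delta> (Vdelta M r \<delta>) (return borel y)"
  using bounded_borel_value_Vdelta
  by (intro obj_two_point[OF stochastic assms]) (auto simp: bounded_borel_value_def)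

lemma optimal_two_point_point_masses:
  assumes x: "x \<in> beliefs" and y: "y \<in> beliefs" and a: "0 < a" "a < 1"
    and opt: "optimal_at M r \<delta> (a *\<^sub>R x + (1 - a) *\<^sub>R y) (two_point a x y)"
  shows "obj M r \<delta> (Vdelta M r \<delta>) (return borel x) = Vdelta M r \<delta> x"
    and "obj M r \<delta> (Vdelta M r \<delta>) (return borel y) = Vdelta M r \<delta> y"
proof -
  define V where "V = Vdelta M r \<delta>"
  define A B where "A = obj M r \<delta> V (return borel x)" and "B = obj M r \<delta> V (return borel y)"
  have "A \<le> V x" "B \<le> V y" unfolding A_def B_def V_def using obj_return_le_Vdelta x y by auto
  then have nonneg: "0 \<le> a * (V x - A)" "0 \<le> (1 - a) * (V y - B)" using a by simp_all
  have "a * V x + (1 - a) * V y \<le> V (a *\<^sub>R x + (1 - a) *\<^sub>R y)"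
    using concave_onD[of beliefs V "1 - a" x y] Vdelta_concave_values x y a
    by (simp add: V_def concave_values_def)
  moreover have "V (a *\<^sub>R x + (1 - a) *\<^sub>R y) = a * A + (1 - a) * B"
    using opt obj_two_point_Vdelta[OF x y] a unfolding optimal_at_def A_def B_def V_def by simp
  ultimately have "a * (V x - A) + (1 - a) * (V y - B) \<le> 0" by (simp add: algebra_simps)
  then have "a * (V x - A) = 0" "(1 - a) * (V y - B) = 0" using nonneg by linarith+
  then show "obj M r \<delta> (Vdelta M r \<delta>) (return borel x) = Vdelta M r \<delta> x"
    and "obj M r \<delta> (Vdelta M r \<delta>) (return borel y) = Vdelta M r \<delta> y"
    using a by (auto simp: A_def B_def V_def)
qed

lemma optimal_two_point_segment:
  assumes x: "x \<in> beliefs" and y: "y \<in> beliefs" and a: "0 < a" "a < 1"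
    and opt: "optimal_at M r \<delta> (a *\<^sub>R x + (1 - a) *\<^sub>R y) (two_point a x y)"
    and t: "0 \<le> t" "t \<le> 1"
  shows "Vdelta M r \<delta> ((1 - t) *\<^sub>R x + t *\<^sub>R y) = (1 - t) * Vdelta M r \<delta> x + t * Vdelta M r \<delta> y"
    and "optimal_at M r \<delta> ((1 - t) *\<^sub>R x + t *\<^sub>R y) (two_point (1 - t) x y)"
proof -
  define V where "V = Vdelta M r \<delta>"
  have chord: "obj M r \<delta> V (two_point (1 - u) x y) = (1 - u) * V x + u * V y" if "0 \<le> u" "u \<le> 1" for u
    using obj_two_point_Vdelta[OF x y, of "1 - u"] optimal_two_point_point_masses[OF x y a opt] that
    by (simp add: V_def)
  have splits: "two_point (1 - t) x y \<in> Splits ((1 - t) *\<^sub>R x + t *\<^sub>R y)"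
    using two_point_in_Splits[OF x y, of "1 - t"] t by simp
  have "(1 - t) * V x + t * V y \<le> V ((1 - t) *\<^sub>R x + t *\<^sub>R y)"
    using obj_le_bellman[OF bounded_borel_value_Vdelta convexD_alt[OF convex_beliefs x y t] splits]
      bellman_Vdelta chord[OF t] by (simp add: V_def)
  moreover have "V ((1 - t) *\<^sub>R x + t *\<^sub>R y) \<le> (1 - t) * V x + t * V y"
  proof (rule concave_on_le_chord_if_touches[OF _ x y _ _ _ t])
    show "concave_on beliefs V" using Vdelta_concave_values by (simp add: V_def concave_values_def)
    show "V ((1 - (1 - a)) *\<^sub>R x + (1 - a) *\<^sub>R y) = (1 - (1 - a)) * V x + (1 - a) * V y"
      using opt chord[of "1 - a"] a unfolding optimal_at_def V_def by simp
  qed (use a in auto)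
  ultimately show eq: "Vdelta M r \<delta> ((1 - t) *\<^sub>R x + t *\<^sub>R y) = (1 - t) * Vdelta M r \<delta> x + t * Vdelta M r \<delta> y"
    by (simp add: V_def)
  show "optimal_at M r \<delta> ((1 - t) *\<^sub>R x + t *\<^sub>R y) (two_point (1 - t) x y)"
    unfolding optimal_at_def using splits chord[OF t] eq by (simp add: V_def)
qed

end

theorem lemma7:
  fixes M :: "real^'w::finite^'w" and r :: "'w \<Rightarrow> real" and \<delta> :: real
    and p qI qJ :: "real^'w" and aI aJ :: real
  assumes "stochastic M" and "irreducible_chain M"
    and "0 \<le> \<delta>" and "\<delta> < 1"
    and "p \<in> Jset r"
    and "qI \<in> Iset r" and "qJ \<in> Jset r"
    and "aI + aJ = 1" and "0 < aI" and "0 < aJ"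
    and "p = aI *\<^sub>R qI + aJ *\<^sub>R qJ"
    and "optimal_at M r \<delta> p (two_point aI qI qJ)"
  shows "(\<forall>t\<in>{0..1}. Vdelta M r \<delta> ((1 - t) *\<^sub>R qI + t *\<^sub>R qJ)
            = (1 - t) * Vdelta M r \<delta> qI + t * Vdelta M r \<delta> qJ)
       \<and> (\<forall>t\<in>{0..1}. optimal_at M r \<delta> ((1 - t) *\<^sub>R qI + t *\<^sub>R qJ) (two_point (1 - t) qI qJ))"
proof -
  have qI: "qI \<in> beliefs" and qJ: "qJ \<in> beliefs"
    using assms(6,7) by (auto simp: Iset_def Jset_def)
  have "aJ = 1 - aI" using assms(8) by simp
  then have opt: "optimal_at M r \<delta> (aI *\<^sub>R qI + (1 - aI) *\<^sub>R qJ) (two_point aI qI qJ)"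
    using assms(11,12) by simp
  have aI: "0 < aI" "aI < 1" using assms(8-10) by auto
  show ?thesis
    using optimal_two_point_segment[OF assms(1,3,4) qI qJ aI opt] by auto
qed

end
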